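(* Let $(\mathcal{J}_g)_{g\in[G]}$ be subsets of $[p]$ with $\bigcup_g\mathcal{J}_g=[p]$, $p_g=|\mathcal{J}_g|$, and suppose there is a constant $C_1>0$ with $\max_{j\in[p]}|\{g:j\in\mathcal{J}_g\}|\le C_1$. Let $A=\delta vu^\top\in\mathbb{R}^{p\times(n-1)}$ with $\delta>0$, $v\in\mathbb{R}^p$, $u\in\mathbb{R}^{n-1}$, $\|v\|_2=\|u\|_2=1$ and $\sum_{g:v_{\mathcal{J}_g}\ne0}p_g\le k$. Suppose $T\in\mathbb{R}^{p\times(n-1)}$ satisfies $\|T-A\|_{\mathrm{grp}*}\le\lambda$ for some $\lambda>0$, and let $\mathcal{S}=\{M\in\mathbb{R}^{p\times(n-1)}:\|M\|_{\mathrm F}\le1\}$. Then for any $\hat M\in\operatorname*{argmax}_{M\in\mathcal{S}}\{\langle T,M\rangle-\lambda\|M\|_{\mathrm{grp}}\}$, \[ \|vu^\top-\hat M\|_{\mathrm F}\le\frac{4\lambda(C_1nk)^{1/2}}{\delta}, \] and, letting $\hat v,\hat u$ be leading left and right singular vectors of $\hat M$, \[ \max\{\sin\angle(v,\hat v),\sin\angle(u,\hat u)\}\le\frac{8\lambda(C_1nk)^{1/2}}{\delta}. \]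
   Context: $\|M\|_{\mathrm{grp}}=\sum_{g=1}^Gp_g^{1/2}\sum_{t}\|M_{\mathcal{J}_g,t}\|_2$ and $\|R\|_{\mathrm{grp}*}=\max_{g}\max_{t}p_g^{-1/2}\|R_{\mathcal{J}_g,t}\|_2$, where $M_{\mathcal{J}_g,t}$ is the vector of entries of the $t$th column of $M$ with rows in $\mathcal{J}_g$; $\langle A,B\rangle=\mathrm{tr}(A^\top B)$; $\sin\angle(a,b)=\sqrt{1-(a^\top b)^2}$ for unit vectors $a,b$. *)

theory Defs
  imports Complex_Main
begin

text \<open>Matrices in R^(p x m) are represented as functions nat => nat => real,
  only entries with row index < p and column index < m being relevant;
  vectors in R^p as functions nat => real (entries with index < p relevant).
  Row indices are [p] = {0..<p}, groups are indexed by {0..<G}.\<close>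

definition frob :: "nat \<Rightarrow> nat \<Rightarrow> (nat \<Rightarrow> nat \<Rightarrow> real) \<Rightarrow> real" where
  "frob p m M = sqrt (\<Sum>i<p. \<Sum>t<m. (M i t)\<^sup>2)"

definition mat_inner :: "nat \<Rightarrow> nat \<Rightarrow> (nat \<Rightarrow> nat \<Rightarrow> real) \<Rightarrow> (nat \<Rightarrow> nat \<Rightarrow> real) \<Rightarrow> real" where
  "mat_inner p m A B = (\<Sum>i<p. \<Sum>t<m. A i t * B i t)"

definition col_block_norm :: "nat set \<Rightarrow> nat \<Rightarrow> (nat \<Rightarrow> nat \<Rightarrow> real) \<Rightarrow> real" where
  "col_block_norm S t M = sqrt (\<Sum>j\<in>S. (M j t)\<^sup>2)"

definition grp_norm :: "nat \<Rightarrow> (nat \<Rightarrow> nat set) \<Rightarrow> nat \<Rightarrow> (nat \<Rightarrow> nat \<Rightarrow> real) \<Rightarrow> real" where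
  "grp_norm G J m M = (\<Sum>g<G. sqrt (real (card (J g))) * (\<Sum>t<m. col_block_norm (J g) t M))"

definition grp_dual_norm :: "nat \<Rightarrow> (nat \<Rightarrow> nat set) \<Rightarrow> nat \<Rightarrow> (nat \<Rightarrow> nat \<Rightarrow> real) \<Rightarrow> real" where
  "grp_dual_norm G J m R =
     Max ((\<lambda>(g, t). col_block_norm (J g) t R / sqrt (real (card (J g)))) ` ({..<G} \<times> {..<m}))"

definition vnorm :: "nat \<Rightarrow> (nat \<Rightarrow> real) \<Rightarrow> real" where
  "vnorm p x = sqrt (\<Sum>i<p. (x i)\<^sup>2)"

definition vdot :: "nat \<Rightarrow> (nat \<Rightarrow> real) \<Rightarrow> (nat \<Rightarrow> real) \<Rightarrow> real" where
  "vdot p x y = (\<Sum>i<p. x i * y i)"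

definition sin_angle :: "nat \<Rightarrow> (nat \<Rightarrow> real) \<Rightarrow> (nat \<Rightarrow> real) \<Rightarrow> real" where
  "sin_angle p a b = sqrt (1 - (vdot p a b)\<^sup>2)"

definition bilin :: "nat \<Rightarrow> nat \<Rightarrow> (nat \<Rightarrow> real) \<Rightarrow> (nat \<Rightarrow> nat \<Rightarrow> real) \<Rightarrow> (nat \<Rightarrow> real) \<Rightarrow> real" where
  "bilin p m x M y = (\<Sum>i<p. \<Sum>t<m. x i * M i t * y t)"

text \<open>(a, b) is a pair of leading left/right singular vectors of M: unit vectors
  attaining the largest singular value, i.e. maximising x^T M y over unit x, y.\<close>
definition leading_sv_pair :: "nat \<Rightarrow> nat \<Rightarrow> (nat \<Rightarrow> nat \<Rightarrow> real) \<Rightarrow> (nat \<Rightarrow> real) \<Rightarrow> (nat \<Rightarrow> real) \<Rightarrow> bool" where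
  "leading_sv_pair p m M a b \<longleftrightarrow>
     vnorm p a = 1 \<and> vnorm m b = 1 \<and>
     (\<forall>x y. vnorm p x = 1 \<longrightarrow> vnorm m y = 1 \<longrightarrow> bilin p m x M y \<le> bilin p m a M b)"

definition is_argmax_on_S :: "nat \<Rightarrow> nat \<Rightarrow> ((nat \<Rightarrow> nat \<Rightarrow> real) \<Rightarrow> real) \<Rightarrow> (nat \<Rightarrow> nat \<Rightarrow> real) \<Rightarrow> bool" where
  "is_argmax_on_S p m f Mh \<longleftrightarrow> frob p m Mh \<le> 1 \<and> (\<forall>M. frob p m M \<le> 1 \<longrightarrow> f M \<le> f Mh)"

end

(* Write M0 = v u^T, E = T - delta M0 and D = M0 - Mh. Since M0 lies in the Frobenius unit
   ball, comparing the objective at Mh and at M0 gives the basic inequality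
   delta/2 |D|_F^2 <= -<E, D> + lam (|M0|_grp - |Mh|_grp). The dual-norm bound gives
   -<E, D> <= lam |D|_grp, and decomposability of the group norm over the groups meeting the
   support of v bounds |D|_grp + |M0|_grp - |Mh|_grp by twice the group norm of D on those
   groups; Cauchy-Schwarz and the overlap bound C1 turn this into 2 (C1 (n-1) k)^(1/2) |D|_F.

   A leading left singular vector vh of Mh is the direction of z = Mh uh, whose length is at least
   v^T Mh u >= 1 - |D|_F. Writing z = beta v - y with |y| <= |D|_F, the component of z orthogonal
   to v has length |z| sin(v, vh) <= |y|, so sin(v, vh) <= 2 |D|_F once |D|_F < 1/2; otherwise the
   bound exceeds 1. The right singular vector is handled by transposing. *)

theory Submission
  imports Defs "HOL-Analysis.Analysis"
begin

lemma sum_groups_eq_sum_multiplicity: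
  fixes G p :: nat and f :: "nat \<Rightarrow> real"
  assumes "\<forall>g<G. J g \<subseteq> {..<p}"
  shows "(\<Sum>g<G. \<Sum>j\<in>J g. f j) = (\<Sum>j<p. real (card {g. g < G \<and> j \<in> J g}) * f j)"
proof -
  have "(\<Sum>g<G. \<Sum>j\<in>J g. f j) = (\<Sum>g<G. \<Sum>j<p. if j \<in> J g then f j else 0)"
  proof (rule sum.cong[OF refl])
    fix g assume "g \<in> {..<G}"
    with assms have "{..<p} \<inter> J g = J g" by auto
    then show "(\<Sum>j\<in>J g. f j) = (\<Sum>j<p. if j \<in> J g then f j else 0)"
      by (metis finite_lessThan sum.inter_restrict)
  qed
  also have "\<dots> = (\<Sum>j<p. \<Sum>g<G. if j \<in> J g then f j else 0)"
    by (rule sum.swap)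
  also have "\<dots> = (\<Sum>j<p. real (card {g. g < G \<and> j \<in> J g}) * f j)"
    by (intro sum.cong refl) (subst sum.inter_filter[symmetric], auto)
  finally show ?thesis .
qed

lemma sum_le_sum_groups_of_cover:
  fixes G p :: nat and f :: "nat \<Rightarrow> real"
  assumes "\<forall>g<G. J g \<subseteq> {..<p}" and "(\<Union>g<G. J g) = {..<p}" and "\<And>j. f j \<ge> 0"
  shows "(\<Sum>j<p. f j) \<le> (\<Sum>g<G. \<Sum>j\<in>J g. f j)"
proof -
  have "f j \<le> real (card {g. g < G \<and> j \<in> J g}) * f j" if "j < p" for j
  proof -
    obtain g where "g < G" "j \<in> J g" using assms(2) \<open>j < p\<close> by blast
    then have "1 \<le> real (card {g. g < G \<and> j \<in> J g})"
      by (auto simp: Suc_le_eq card_gt_0_iff)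
    from mult_right_mono[OF this assms(3)] show ?thesis by simp
  qed
  then show ?thesis
    unfolding sum_groups_eq_sum_multiplicity[OF assms(1)] by (intro sum_mono) simp
qed

lemma sum_groups_le_of_overlap:
  fixes G p :: nat and f :: "nat \<Rightarrow> real"
  assumes "\<forall>g<G. J g \<subseteq> {..<p}" and "\<forall>j<p. real (card {g. g < G \<and> j \<in> J g}) \<le> C"
    and "\<And>j. f j \<ge> 0"
  shows "(\<Sum>g<G. \<Sum>j\<in>J g. f j) \<le> C * (\<Sum>j<p. f j)"
  unfolding sum_groups_eq_sum_multiplicity[OF assms(1)] sum_distrib_left
  using assms(2,3) by (intro sum_mono mult_right_mono) auto

lemma double_sum_Cauchy_Schwarz:
  fixes f g :: "'a \<Rightarrow> 'b \<Rightarrow> real"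
  shows "(\<Sum>i\<in>A. \<Sum>t\<in>B. f i t * g i t)\<^sup>2
    \<le> (\<Sum>i\<in>A. \<Sum>t\<in>B. (f i t)\<^sup>2) * (\<Sum>i\<in>A. \<Sum>t\<in>B. (g i t)\<^sup>2)"
  using Cauchy_Schwarz_ineq_sum[of "\<lambda>x. f (fst x) (snd x)" "\<lambda>x. g (fst x) (snd x)" "A \<times> B"]
  by (simp add: sum.cartesian_product case_prod_beta)

lemma vnorm_eq_1_iff: "vnorm p x = 1 \<longleftrightarrow> (\<Sum>i<p. (x i)\<^sup>2) = 1"
  unfolding vnorm_def by simp

lemma vnorm_nonneg: "vnorm p x \<ge> 0"
  unfolding vnorm_def by (simp add: sum_nonneg)

lemma vnorm_sq: "(vnorm p x)\<^sup>2 = (\<Sum>i<p. (x i)\<^sup>2)"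
  unfolding vnorm_def by (simp add: sum_nonneg)

lemma frob_nonneg: "frob p m M \<ge> 0"
  unfolding frob_def by (simp add: sum_nonneg)

lemma frob_sq: "(frob p m M)\<^sup>2 = (\<Sum>i<p. \<Sum>t<m. (M i t)\<^sup>2)"
  unfolding frob_def by (simp add: sum_nonneg)

lemma mat_inner_self: "mat_inner p m M M = (frob p m M)\<^sup>2"
  unfolding frob_sq mat_inner_def by (simp add: power2_eq_square)

lemma frob_rank_one: "frob p m (\<lambda>i t. v i * u t) = vnorm p v * vnorm m u"
  unfolding frob_def vnorm_def
  by (simp add: power_mult_distrib sum_distrib_left[symmetric] sum_distrib_right[symmetric]
      real_sqrt_mult)

lemma frob_transpose: "frob m p (\<lambda>t i. M i t) = frob p m M"
  unfolding frob_def by (subst sum.swap) simp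

lemma abs_vdot_le: "\<bar>vdot p x y\<bar> \<le> vnorm p x * vnorm p y"
  using Cauchy_Schwarz_ineq_sum[of x y "{..<p}"]
  by (subst power2_le_iff_abs_le[symmetric])
    (simp_all add: vdot_def power_mult_distrib vnorm_sq vnorm_nonneg)

lemma abs_mat_inner_le: "\<bar>mat_inner p m A B\<bar> \<le> frob p m A * frob p m B"
  using double_sum_Cauchy_Schwarz[where f=A and g=B and A="{..<p}" and B="{..<m}"]
  by (subst power2_le_iff_abs_le[symmetric])
    (simp_all add: mat_inner_def power_mult_distrib frob_sq frob_nonneg)

lemma vnorm_mat_vec_le: "vnorm p (\<lambda>i. \<Sum>t<m. M i t * y t) \<le> frob p m M * vnorm m y"
proof -
  have "(\<Sum>i<p. (\<Sum>t<m. M i t * y t)\<^sup>2) \<le> (\<Sum>i<p. (\<Sum>t<m. (M i t)\<^sup>2) * (\<Sum>t<m. (y t)\<^sup>2))"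
    by (intro sum_mono Cauchy_Schwarz_ineq_sum)
  also have "\<dots> = (frob p m M * vnorm m y)\<^sup>2"
    by (simp add: power_mult_distrib frob_sq vnorm_sq sum_distrib_right)
  finally show ?thesis
    by (subst vnorm_def) (intro real_le_lsqrt mult_nonneg_nonneg frob_nonneg vnorm_nonneg)
qed

section \<open>The group norm and its dual\<close>

lemma col_block_norm_eq_L2_set: "col_block_norm S t M = L2_set (\<lambda>j. M j t) S"
  by (simp add: col_block_norm_def L2_set_def)

lemma col_block_norm_nonneg: "col_block_norm S t M \<ge> 0"
  by (simp add: col_block_norm_eq_L2_set)

lemma grp_norm_nonneg: "grp_norm G J m M \<ge> 0"
  unfolding grp_norm_def
  by (intro sum_nonneg mult_nonneg_nonneg) (simp_all add: col_block_norm_nonneg sum_nonneg)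

lemma col_block_norm_le_grp_dual_norm:
  assumes "g < G" and "t < m" and "finite (J g)"
  shows "col_block_norm (J g) t E \<le> grp_dual_norm G J m E * sqrt (real (card (J g)))"
proof (cases "J g = {}")
  case True
  then show ?thesis by (simp add: col_block_norm_def)
next
  case False
  with assms(3) have weight_pos: "sqrt (real (card (J g))) > 0" by (simp add: card_gt_0_iff)
  have "col_block_norm (J g) t E / sqrt (real (card (J g))) \<le> grp_dual_norm G J m E"
    unfolding grp_dual_norm_def using assms(1,2) by (intro Max_ge) force+
  with weight_pos show ?thesis by (simp add: pos_divide_le_eq)
qed

lemma abs_mat_inner_le_grp_dual_norm:
  fixes G p m :: nat
  assumes J_sub: "\<forall>g<G. J g \<subseteq> {..<p}" and J_cover: "(\<Union>g<G. J g) = {..<p}"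
  shows "\<bar>mat_inner p m E D\<bar> \<le> grp_dual_norm G J m E * grp_norm G J m D"
proof -
  have "\<bar>mat_inner p m E D\<bar> \<le> (\<Sum>j<p. \<Sum>t<m. \<bar>E j t\<bar> * \<bar>D j t\<bar>)"
    unfolding mat_inner_def abs_mult[symmetric]
    by (rule order_trans[OF sum_abs]) (intro sum_mono sum_abs)
  also have "\<dots> = (\<Sum>t<m. \<Sum>j<p. \<bar>E j t\<bar> * \<bar>D j t\<bar>)"
    by (rule sum.swap)
  also have "\<dots> \<le> (\<Sum>t<m. \<Sum>g<G. \<Sum>j\<in>J g. \<bar>E j t\<bar> * \<bar>D j t\<bar>)"
    by (intro sum_mono sum_le_sum_groups_of_cover[OF J_sub J_cover]) simp
  also have "\<dots> \<le> (\<Sum>t<m. \<Sum>g<G. col_block_norm (J g) t E * col_block_norm (J g) t D)"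
    unfolding col_block_norm_eq_L2_set by (intro sum_mono L2_set_mult_ineq)
  also have "\<dots> \<le> (\<Sum>t<m. \<Sum>g<G.
      grp_dual_norm G J m E * sqrt (real (card (J g))) * col_block_norm (J g) t D)"
    using J_sub
    by (intro sum_mono mult_right_mono col_block_norm_le_grp_dual_norm col_block_norm_nonneg)
      (auto intro: finite_subset)
  also have "\<dots> = grp_dual_norm G J m E * grp_norm G J m D"
    unfolding grp_norm_def by (subst sum.swap) (simp add: sum_distrib_left mult.assoc)
  finally show ?thesis .
qed

definition grp_norm_on ::
    "nat set \<Rightarrow> (nat \<Rightarrow> nat set) \<Rightarrow> nat \<Rightarrow> (nat \<Rightarrow> nat \<Rightarrow> real) \<Rightarrow> real" where
  "grp_norm_on S J m M = (\<Sum>g\<in>S. sqrt (real (card (J g))) * (\<Sum>t<m. col_block_norm (J g) t M))"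

lemma grp_norm_decomposable:
  fixes G :: nat
  assumes S_sub: "S \<subseteq> {..<G}"
    and M0_vanishes: "\<And>g j t. g < G \<Longrightarrow> g \<notin> S \<Longrightarrow> j \<in> J g \<Longrightarrow> M0 j t = 0"
  shows "grp_norm G J m (\<lambda>i t. M0 i t - M i t) + grp_norm G J m M0 - grp_norm G J m M
    \<le> 2 * grp_norm_on S J m (\<lambda>i t. M0 i t - M i t)"
proof -
  define D where "D i t = M0 i t - M i t" for i t
  define excess where "excess g =
    (\<Sum>t<m. col_block_norm (J g) t D + col_block_norm (J g) t M0 - col_block_norm (J g) t M)" for g
  have excess_le: "excess g \<le> (if g \<in> S then 2 * (\<Sum>t<m. col_block_norm (J g) t D) else 0)"
    if "g < G" for g
  proof (cases "g \<in> S")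
    case True
    have "col_block_norm (J g) t D + col_block_norm (J g) t M0 - col_block_norm (J g) t M
        \<le> 2 * col_block_norm (J g) t D" for t
      using L2_set_triangle_ineq[of "\<lambda>j. M j t" "\<lambda>j. D j t" "J g"]
      by (simp add: col_block_norm_eq_L2_set D_def)
    with True show ?thesis
      unfolding excess_def sum_distrib_left by (simp add: sum_mono)
  next
    case False
    with M0_vanishes \<open>g < G\<close> show ?thesis
      by (simp add: excess_def col_block_norm_def D_def)
  qed
  have "grp_norm G J m D + grp_norm G J m M0 - grp_norm G J m M
      = (\<Sum>g<G. sqrt (real (card (J g))) * excess g)"
    unfolding grp_norm_def excess_def
    by (simp add: sum.distrib sum_subtractf distrib_left right_diff_distrib)
  also have "\<dots> \<le> (\<Sum>g<G. sqrt (real (card (J g))) *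
      (if g \<in> S then 2 * (\<Sum>t<m. col_block_norm (J g) t D) else 0))"
    using excess_le by (intro sum_mono mult_left_mono) auto
  also have "\<dots> = 2 * grp_norm_on S J m D"
    using S_sub
    by (simp add: grp_norm_on_def sum_distrib_left sum.inter_restrict[symmetric] Int_absorb1
        if_distrib mult.left_commute cong: if_cong)
  finally show ?thesis unfolding D_def .
qed

lemma grp_norm_on_le_frob:
  fixes G p m :: nat
  assumes J_sub: "\<forall>g<G. J g \<subseteq> {..<p}"
    and overlap: "\<forall>j<p. real (card {g. g < G \<and> j \<in> J g}) \<le> C" and "C \<ge> 0"
    and S_sub: "S \<subseteq> {..<G}"
  shows "grp_norm_on S J m D \<le> sqrt (C * real m * (\<Sum>g\<in>S. real (card (J g)))) * frob p m D"
proof -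
  define size_S where "size_S = (\<Sum>g\<in>S. real (card (J g)))"
  define block_sq where "block_sq = (\<Sum>g\<in>S. \<Sum>t<m. (col_block_norm (J g) t D)\<^sup>2)"
  have grp_norm_on_eq: "grp_norm_on S J m D
      = (\<Sum>g\<in>S. \<Sum>t<m. sqrt (real (card (J g))) * col_block_norm (J g) t D)"
    by (simp add: grp_norm_on_def sum_distrib_left)
  have "(grp_norm_on S J m D)\<^sup>2
      \<le> (\<Sum>g\<in>S. \<Sum>t<m. (sqrt (real (card (J g))))\<^sup>2) * block_sq"
    unfolding grp_norm_on_eq block_sq_def by (rule double_sum_Cauchy_Schwarz)
  also have "(\<Sum>g\<in>S. \<Sum>t<m. (sqrt (real (card (J g))))\<^sup>2) = real m * size_S"
    by (simp add: size_S_def sum_distrib_left mult.commute)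
  finally have CS: "(grp_norm_on S J m D)\<^sup>2 \<le> real m * size_S * block_sq" .
  have "block_sq \<le> (\<Sum>g<G. \<Sum>t<m. (col_block_norm (J g) t D)\<^sup>2)"
    unfolding block_sq_def using S_sub by (intro sum_mono2) (auto intro: sum_nonneg)
  also have "\<dots> = (\<Sum>t<m. \<Sum>g<G. \<Sum>j\<in>J g. (D j t)\<^sup>2)"
    by (subst sum.swap) (simp add: col_block_norm_def sum_nonneg)
  also have "\<dots> \<le> (\<Sum>t<m. C * (\<Sum>j<p. (D j t)\<^sup>2))"
    by (intro sum_mono sum_groups_le_of_overlap[OF J_sub overlap]) simp
  also have "\<dots> = C * (frob p m D)\<^sup>2"
    unfolding frob_sq by (subst sum.swap) (simp add: sum_distrib_left)
  finally have block_sq_le: "block_sq \<le> C * (frob p m D)\<^sup>2" .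
  have size_nonneg: "real m * size_S \<ge> 0"
    by (simp add: size_S_def sum_nonneg)
  then have sqrt_sq: "(sqrt (C * real m * size_S))\<^sup>2 = C * real m * size_S"
    using \<open>C \<ge> 0\<close> by (simp add: mult.assoc)
  have sqrt_nonneg: "sqrt (C * real m * size_S) \<ge> 0"
    using \<open>C \<ge> 0\<close> size_nonneg by (simp add: mult.assoc)
  have "(grp_norm_on S J m D)\<^sup>2 \<le> real m * size_S * (C * (frob p m D)\<^sup>2)"
    using CS mult_left_mono[OF block_sq_le size_nonneg] by linarith
  also have "\<dots> = (sqrt (C * real m * size_S) * frob p m D)\<^sup>2"
    by (simp only: power_mult_distrib sqrt_sq) (simp add: algebra_simps)
  finally show ?thesis
    unfolding size_S_def[symmetric]
    by (rule power2_le_imp_le) (rule mult_nonneg_nonneg[OF sqrt_nonneg frob_nonneg])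
qed

section \<open>Frobenius error of the penalised estimator\<close>

lemma frob_dist_sq_le_of_argmax:
  fixes pen :: "(nat \<Rightarrow> nat \<Rightarrow> real) \<Rightarrow> real"
  assumes argmax: "is_argmax_on_S p m (\<lambda>M. mat_inner p m T M - lam * pen M) Mh"
    and M0_unit: "frob p m M0 = 1" and "\<delta> \<ge> 0"
  shows "\<delta> / 2 * (frob p m (\<lambda>i t. M0 i t - Mh i t))\<^sup>2
    \<le> - mat_inner p m (\<lambda>i t. T i t - \<delta> * M0 i t) (\<lambda>i t. M0 i t - Mh i t)
       + lam * (pen M0 - pen Mh)"
proof -
  have opt: "mat_inner p m T M0 - lam * pen M0 \<le> mat_inner p m T Mh - lam * pen Mh"
    using argmax M0_unit unfolding is_argmax_on_S_def by simp
  have "(frob p m Mh)\<^sup>2 \<le> 1"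
    using argmax frob_nonneg unfolding is_argmax_on_S_def by (simp add: power_le_one)
  moreover have "(frob p m (\<lambda>i t. M0 i t - Mh i t))\<^sup>2
      = (frob p m Mh)\<^sup>2 - 2 * mat_inner p m M0 Mh + (frob p m M0)\<^sup>2"
    unfolding frob_sq mat_inner_def
    by (simp add: power2_diff sum.distrib sum_subtractf sum_distrib_left algebra_simps)
  ultimately have dist: "(frob p m (\<lambda>i t. M0 i t - Mh i t))\<^sup>2 \<le> 2 * (1 - mat_inner p m M0 Mh)"
    using M0_unit by simp
  have "mat_inner p m (\<lambda>i t. T i t - \<delta> * M0 i t) (\<lambda>i t. M0 i t - Mh i t)
      = mat_inner p m T M0 - mat_inner p m T Mh - \<delta> * (mat_inner p m M0 M0 - mat_inner p m M0 Mh)"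
    unfolding mat_inner_def
    by (simp add: sum_subtractf[symmetric] sum_distrib_left algebra_simps)
  with M0_unit have "mat_inner p m (\<lambda>i t. T i t - \<delta> * M0 i t) (\<lambda>i t. M0 i t - Mh i t)
      = mat_inner p m T M0 - mat_inner p m T Mh - \<delta> * (1 - mat_inner p m M0 Mh)"
    by (simp add: mat_inner_self)
  moreover have "\<delta> / 2 * (frob p m (\<lambda>i t. M0 i t - Mh i t))\<^sup>2 \<le> \<delta> * (1 - mat_inner p m M0 Mh)"
    using mult_left_mono[OF dist, of "\<delta> / 2"] \<open>\<delta> \<ge> 0\<close> by (simp add: algebra_simps)
  ultimately show ?thesis
    using opt by (simp add: algebra_simps)
qed

lemma le_of_half_mult_sq_le:
  fixes x c \<delta> :: real
  assumes "\<delta> > 0" and "c \<ge> 0" and "\<delta> / 2 * x\<^sup>2 \<le> c * x"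
  shows "x \<le> 2 * c / \<delta>"
proof (cases "x > 0")
  case True
  with assms(3) have "\<delta> / 2 * x \<le> c"
    by (simp add: power2_eq_square mult.assoc[symmetric])
  with \<open>\<delta> > 0\<close> show ?thesis
    by (simp add: field_simps)
next
  case False
  with assms(1,2) show ?thesis
    by (smt (verit) divide_nonneg_pos)
qed

lemma frob_error_bound:
  fixes p m G :: nat and v u :: "nat \<Rightarrow> real"
  assumes J_sub: "\<forall>g<G. J g \<subseteq> {..<p}" and J_cover: "(\<Union>g<G. J g) = {..<p}"
    and overlap: "\<forall>j<p. real (card {g. g < G \<and> j \<in> J g}) \<le> C1" and "C1 \<ge> 0"
    and "\<delta> > 0" and "lam \<ge> 0"
    and v_unit: "vnorm p v = 1" and u_unit: "vnorm m u = 1"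
    and sparse: "(\<Sum>g\<in>{g. g < G \<and> (\<exists>j\<in>J g. v j \<noteq> 0)}. real (card (J g))) \<le> k"
    and T_close: "grp_dual_norm G J m (\<lambda>i t. T i t - \<delta> * v i * u t) \<le> lam"
    and Mh_argmax: "is_argmax_on_S p m (\<lambda>M. mat_inner p m T M - lam * grp_norm G J m M) Mh"
  shows "frob p m (\<lambda>i t. v i * u t - Mh i t) \<le> 4 * lam * sqrt (C1 * real m * k) / \<delta>"
proof -
  define M0 where "M0 = (\<lambda>i t. v i * u t)"
  define E where "E = (\<lambda>i t. T i t - \<delta> * M0 i t)"
  define D where "D = (\<lambda>i t. M0 i t - Mh i t)"
  define S where "S = {g. g < G \<and> (\<exists>j\<in>J g. v j \<noteq> 0)}"
  define K where "K = sqrt (C1 * real m * k)"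
  define F where "F = frob p m D"
  have M0_unit: "frob p m M0 = 1"
    using frob_rank_one v_unit u_unit by (simp add: M0_def)
  have basic: "\<delta> / 2 * F\<^sup>2 \<le> - mat_inner p m E D + lam * (grp_norm G J m M0 - grp_norm G J m Mh)"
    using frob_dist_sq_le_of_argmax[OF Mh_argmax M0_unit] \<open>\<delta> > 0\<close>
    by (simp add: F_def E_def D_def)
  have "grp_dual_norm G J m E \<le> lam"
    using T_close by (simp add: E_def M0_def mult.assoc)
  then have dual: "- mat_inner p m E D \<le> lam * grp_norm G J m D"
    using abs_mat_inner_le_grp_dual_norm[OF J_sub J_cover, of m E D]
      mult_right_mono[OF _ grp_norm_nonneg, of "grp_dual_norm G J m E" lam G J m D]
    by linarith
  have decomp: "grp_norm G J m D + grp_norm G J m M0 - grp_norm G J m Mh \<le> 2 * grp_norm_on S J m D"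
    unfolding D_def by (rule grp_norm_decomposable) (auto simp: S_def M0_def)
  have "grp_norm_on S J m D \<le> sqrt (C1 * real m * (\<Sum>g\<in>S. real (card (J g)))) * F"
    unfolding F_def by (rule grp_norm_on_le_frob[OF J_sub overlap \<open>C1 \<ge> 0\<close>]) (auto simp: S_def)
  also have "\<dots> \<le> K * F"
    unfolding K_def F_def using sparse \<open>C1 \<ge> 0\<close>
    by (intro mult_right_mono real_sqrt_le_mono mult_left_mono frob_nonneg) (auto simp: S_def)
  finally have sparse_bound: "grp_norm_on S J m D \<le> K * F" .
  have "\<delta> / 2 * F\<^sup>2 \<le> lam * (grp_norm G J m D + grp_norm G J m M0 - grp_norm G J m Mh)"
    using basic dual by (simp add: algebra_simps)
  also have "\<dots> \<le> lam * (2 * (K * F))"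
    using decomp sparse_bound \<open>lam \<ge> 0\<close> by (intro mult_left_mono) auto
  finally have quadratic: "\<delta> / 2 * F\<^sup>2 \<le> 2 * lam * K * F"
    by (simp add: algebra_simps)
  have "k \<ge> 0"
    using sparse by (rule order_trans[rotated]) (simp add: sum_nonneg)
  with \<open>C1 \<ge> 0\<close> \<open>lam \<ge> 0\<close> have "2 * lam * K \<ge> 0"
    by (simp add: K_def)
  from le_of_half_mult_sq_le[OF \<open>\<delta> > 0\<close> this quadratic] show ?thesis
    by (simp add: F_def D_def M0_def K_def)
qed

section \<open>Perturbation of leading singular vectors\<close>

lemma sin_angle_le_1: "sin_angle p a b \<le> 1"
  by (simp add: sin_angle_def)

lemma vdot_maximiser_on_sphere:
  assumes a_unit: "vnorm p a = 1"
    and maximal: "\<And>x. vnorm p x = 1 \<Longrightarrow> vdot p x z \<le> vdot p a z"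
  shows "vdot p a z = vnorm p z" and "\<And>i. i < p \<Longrightarrow> vnorm p z * a i = z i"
proof -
  have le: "vdot p a z \<le> vnorm p z"
    using abs_vdot_le[of p a z] a_unit by simp
  show eq: "vdot p a z = vnorm p z"
  proof (cases "vnorm p z = 0")
    case True
    with abs_vdot_le[of p a z] show ?thesis by simp
  next
    case False
    then have pos: "vnorm p z > 0"
      using vnorm_nonneg[of p z] by linarith
    define x where "x i = z i / vnorm p z" for i
    have "(\<Sum>i<p. (x i)\<^sup>2) = (\<Sum>i<p. (z i)\<^sup>2) / (vnorm p z)\<^sup>2"
      by (simp add: x_def power_divide sum_divide_distrib)
    with pos have "vnorm p x = 1"
      by (simp add: vnorm_eq_1_iff flip: vnorm_sq)
    then have "vdot p x z \<le> vdot p a z" by (rule maximal)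
    moreover have "vdot p x z = (vnorm p z)\<^sup>2 / vnorm p z"
      unfolding vdot_def x_def vnorm_sq by (simp add: sum_divide_distrib power2_eq_square)
    ultimately show ?thesis
      using le pos by (simp add: power2_eq_square)
  qed
  have "(\<Sum>i<p. (vnorm p z * a i - z i)\<^sup>2)
      = (vnorm p z)\<^sup>2 * (\<Sum>i<p. (a i)\<^sup>2) - 2 * vnorm p z * vdot p a z + (\<Sum>i<p. (z i)\<^sup>2)"
    unfolding vdot_def
    by (simp add: power2_diff power_mult_distrib sum.distrib sum_subtractf sum_distrib_left
        algebra_simps)
  also have "\<dots> = 0"
    using a_unit eq by (simp add: vnorm_eq_1_iff flip: vnorm_sq) (simp add: power2_eq_square)
  finally show "\<And>i. i < p \<Longrightarrow> vnorm p z * a i = z i"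
    by (simp add: sum_nonneg_eq_0_iff)
qed

lemma bilin_ge_of_frob_dist:
  assumes "vnorm p v = 1" and "vnorm m u = 1"
  shows "bilin p m v M u \<ge> 1 - frob p m (\<lambda>i t. v i * u t - M i t)"
proof -
  define M0 where "M0 = (\<lambda>i t. v i * u t)"
  have "bilin p m v M u = mat_inner p m M0 M0 - mat_inner p m M0 (\<lambda>i t. M0 i t - M i t)"
    unfolding bilin_def mat_inner_def M0_def
    by (simp add: sum_subtractf[symmetric] algebra_simps)
  also have "mat_inner p m M0 M0 = 1"
    using assms by (simp add: mat_inner_self frob_rank_one M0_def)
  finally show ?thesis
    using abs_mat_inner_le[of p m M0 "\<lambda>i t. M0 i t - M i t"] assms
    by (simp add: frob_rank_one M0_def)
qed

lemma leading_sv_pair_left_vector: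
  assumes "leading_sv_pair p m M a b"
  defines "z \<equiv> \<lambda>i. \<Sum>t<m. M i t * b t"
  shows "bilin p m a M b = vnorm p z" and "\<And>i. i < p \<Longrightarrow> vnorm p z * a i = z i"
proof -
  have bilin_b: "bilin p m x M b = vdot p x z" for x
    by (simp add: bilin_def vdot_def z_def sum_distrib_left mult.assoc)
  have a_unit: "vnorm p a = 1"
    using assms(1) by (simp add: leading_sv_pair_def)
  have "vdot p x z \<le> vdot p a z" if "vnorm p x = 1" for x
    using assms(1) that by (simp add: leading_sv_pair_def flip: bilin_b)
  note maximiser = vdot_maximiser_on_sphere[OF a_unit this]
  show "bilin p m a M b = vnorm p z"
    using maximiser(1) by (simp add: bilin_b)
  show "\<And>i. i < p \<Longrightarrow> vnorm p z * a i = z i"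
    by (rule maximiser(2))
qed

lemma vnorm_sq_mult_one_minus_vdot_sq_le:
  assumes v_unit: "vnorm p v = 1"
    and a_dir: "\<And>i. i < p \<Longrightarrow> vnorm p z * a i = z i"
    and z_eq: "\<And>i. i < p \<Longrightarrow> z i = \<beta> * v i - y i"
  shows "(vnorm p z)\<^sup>2 * (1 - (vdot p v a)\<^sup>2) \<le> (vnorm p y)\<^sup>2"
proof -
  have v_sq: "(\<Sum>i<p. (v i)\<^sup>2) = 1"
    using v_unit by (simp add: vnorm_eq_1_iff)
  have "vnorm p z * vdot p v a = (\<Sum>i<p. v i * z i)"
    using a_dir by (simp add: vdot_def sum_distrib_left mult.left_commute)
  also have "\<dots> = \<beta> - vdot p v y"
    using v_sq by (simp add: z_eq vdot_def right_diff_distrib sum_subtractf power2_eq_square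
        mult.left_commute flip: sum_distrib_left)
  finally have along_v: "vnorm p z * vdot p v a = \<beta> - vdot p v y" .
  have "(vnorm p z)\<^sup>2 = (\<Sum>i<p. (\<beta> * v i - y i)\<^sup>2)"
    by (simp add: vnorm_sq z_eq)
  also have "\<dots> = \<beta>\<^sup>2 - 2 * \<beta> * vdot p v y + (vnorm p y)\<^sup>2"
    using v_sq by (simp add: power2_diff power_mult_distrib vdot_def vnorm_sq sum.distrib
        sum_subtractf sum_distrib_left[symmetric] algebra_simps)
      (simp add: sum_distrib_left mult_ac)
  finally have total: "(vnorm p z)\<^sup>2 = \<beta>\<^sup>2 - 2 * \<beta> * vdot p v y + (vnorm p y)\<^sup>2" .
  have "(vnorm p z)\<^sup>2 * (1 - (vdot p v a)\<^sup>2) = (vnorm p z)\<^sup>2 - (vnorm p z * vdot p v a)\<^sup>2"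
    by (simp add: algebra_simps power_mult_distrib)
  also have "\<dots> = (vnorm p y)\<^sup>2 - (vdot p v y)\<^sup>2"
    unfolding along_v total by (simp add: power2_diff)
  finally show ?thesis
    by simp
qed

lemma sin_angle_le_of_frob_dist:
  assumes v_unit: "vnorm p v = 1" and u_unit: "vnorm m u = 1"
    and lead: "leading_sv_pair p m M a b"
    and close: "frob p m (\<lambda>i t. v i * u t - M i t) \<le> e"
  shows "sin_angle p v a \<le> 2 * e"
proof (cases "e < 1 / 2")
  case False
  then show ?thesis using sin_angle_le_1[of p v a] by linarith
next
  case True
  define z where "z = (\<lambda>i. \<Sum>t<m. M i t * b t)"
  define y where "y = (\<lambda>i. \<Sum>t<m. (v i * u t - M i t) * b t)"
  define c where "c = vdot p v a"
  have left_vector: "bilin p m a M b = vnorm p z" "\<And>i. i < p \<Longrightarrow> vnorm p z * a i = z i"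
    using leading_sv_pair_left_vector[OF lead] by (simp_all add: z_def)
  have "1 - e \<le> bilin p m v M u"
    using bilin_ge_of_frob_dist[OF v_unit u_unit, of M] close by linarith
  also have "\<dots> \<le> vnorm p z"
    using lead v_unit u_unit left_vector(1) by (simp add: leading_sv_pair_def)
  finally have "(vnorm p z)\<^sup>2 \<ge> (1 / 2)\<^sup>2"
    using True by (intro power_mono) auto
  then have z_sq: "(vnorm p z)\<^sup>2 \<ge> 1 / 4"
    by (simp add: power2_eq_square)
  have z_eq: "z i = (\<Sum>t<m. u t * b t) * v i - y i" for i
    by (simp add: z_def y_def sum_distrib_left sum_subtractf[symmetric] algebra_simps)
  have "(vnorm p z)\<^sup>2 * (1 - c\<^sup>2) \<le> (vnorm p y)\<^sup>2"
    unfolding c_def by (rule vnorm_sq_mult_one_minus_vdot_sq_le[OF v_unit left_vector(2) z_eq])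
  also have "\<dots> \<le> e\<^sup>2"
    using vnorm_mat_vec_le[where p=p and m=m and M="\<lambda>i t. v i * u t - M i t" and y=b]
      lead close
    by (intro power_mono vnorm_nonneg) (simp add: y_def leading_sv_pair_def)
  finally have perturbation: "(vnorm p z)\<^sup>2 * (1 - c\<^sup>2) \<le> e\<^sup>2" .
  have "1 - c\<^sup>2 \<le> (2 * e)\<^sup>2"
  proof (cases "1 - c\<^sup>2 \<ge> 0")
    case True
    then have "1 / 4 * (1 - c\<^sup>2) \<le> (vnorm p z)\<^sup>2 * (1 - c\<^sup>2)"
      by (rule mult_right_mono[OF z_sq])
    with perturbation show ?thesis
      by (simp add: power_mult_distrib)
  next
    case False
    then show ?thesis
      using zero_le_power2[of "2 * e"] by linarith
  qed
  moreover have "e \<ge> 0"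
    using close frob_nonneg order_trans by blast
  ultimately show ?thesis
    by (simp add: sin_angle_def c_def real_le_lsqrt)
qed

lemma leading_sv_pair_transpose:
  assumes "leading_sv_pair p m M a b"
  shows "leading_sv_pair m p (\<lambda>t i. M i t) b a"
proof -
  have "bilin m p y (\<lambda>t i. M i t) x = bilin p m x M y" for x y
    unfolding bilin_def by (subst sum.swap) (simp add: algebra_simps)
  with assms show ?thesis
    unfolding leading_sv_pair_def by simp
qed

theorem mainTheorem8:
  fixes p n G :: nat and J :: "nat \<Rightarrow> nat set"
    and C1 \<delta> lam k :: real
    and v u :: "nat \<Rightarrow> real" and T Mh :: "nat \<Rightarrow> nat \<Rightarrow> real"
    and vh uh :: "nat \<Rightarrow> real"
  assumes J_sub: "\<forall>g<G. J g \<subseteq> {..<p}"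
    and J_cover: "(\<Union>g<G. J g) = {..<p}"
    and C1_pos: "C1 > 0"
    and overlap: "\<forall>j<p. real (card {g. g < G \<and> j \<in> J g}) \<le> C1"
    and delta_pos: "\<delta> > 0"
    and v_unit: "vnorm p v = 1" and u_unit: "vnorm (n - 1) u = 1"
    and sparse: "(\<Sum>g\<in>{g. g < G \<and> (\<exists>j\<in>J g. v j \<noteq> 0)}. real (card (J g))) \<le> k"
    and lambda_pos: "lam > 0"
    and T_close: "grp_dual_norm G J (n - 1) (\<lambda>i t. T i t - \<delta> * v i * u t) \<le> lam"
    and Mh_argmax: "is_argmax_on_S p (n - 1)
                      (\<lambda>M. mat_inner p (n - 1) T M - lam * grp_norm G J (n - 1) M) Mh"
    and svd: "leading_sv_pair p (n - 1) Mh vh uh"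
  shows "frob p (n - 1) (\<lambda>i t. v i * u t - Mh i t) \<le> 4 * lam * sqrt (C1 * real n * k) / \<delta>
    \<and> max (sin_angle p v vh) (sin_angle (n - 1) u uh) \<le> 8 * lam * sqrt (C1 * real n * k) / \<delta>"
proof -
  define \<epsilon> where "\<epsilon> = 4 * lam * sqrt (C1 * real n * k) / \<delta>"
  have "k \<ge> 0"
    using sparse by (rule order_trans[rotated]) (simp add: sum_nonneg)
  have "frob p (n - 1) (\<lambda>i t. v i * u t - Mh i t) \<le> 4 * lam * sqrt (C1 * real (n - 1) * k) / \<delta>"
    using C1_pos delta_pos lambda_pos
    by (intro frob_error_bound[OF J_sub J_cover overlap _ _ _ v_unit u_unit sparse T_close Mh_argmax])
      auto
  also have "\<dots> \<le> \<epsilon>"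
    unfolding \<epsilon>_def using C1_pos \<open>k \<ge> 0\<close> lambda_pos delta_pos
    by (intro divide_right_mono mult_left_mono real_sqrt_le_mono mult_right_mono) auto
  finally have frob_le: "frob p (n - 1) (\<lambda>i t. v i * u t - Mh i t) \<le> \<epsilon>" .
  then have "frob (n - 1) p (\<lambda>t i. u t * v i - Mh i t) \<le> \<epsilon>"
    using frob_transpose[where p=p and m="n - 1" and M="\<lambda>i t. v i * u t - Mh i t"]
    by (simp add: mult.commute)
  then have "sin_angle (n - 1) u uh \<le> 2 * \<epsilon>"
    by (rule sin_angle_le_of_frob_dist[OF u_unit v_unit leading_sv_pair_transpose[OF svd]])
  moreover have "sin_angle p v vh \<le> 2 * \<epsilon>"
    by (rule sin_angle_le_of_frob_dist[OF v_unit u_unit svd frob_le])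
  ultimately show ?thesis
    using frob_le by (simp add: \<epsilon>_def)
qed

end
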